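(* Let $\mathbb F_q$ be a finite field and let $A \subseteq \mathbb F_q^n$ and $B \subseteq \mathbb F_q^m$ be nonempty, with $A \times B := \{(x,y) \in \mathbb F_q^{n+m} : x \in A, y \in B\}$. Then: (a) if $0 \in A$ and $0 \in B$, then $\omega(A \times B) = \omega(A) + \omega(B)$; (b) $\omega^\to(A \times B) = \omega^\to(A) + \omega^\to(B)$; (c) $\omega_{\mathrm{aff}}(A \times B) = \omega_{\mathrm{aff}}(A) + \omega_{\mathrm{aff}}(B)$; (d) if $0 \in A$ and $0 \in B$, then $\mathrm{rank}(A \times B) = \mathrm{rank}(A) + \mathrm{rank}(B)$; (e) $\mathrm{rank}_{\mathrm{aff}}(A \times B) = \mathrm{rank}_{\mathrm{aff}}(A) + \mathrm{rank}_{\mathrm{aff}}(B) - 1$.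
   Context: For nonempty $A \subseteq \mathbb F_q^n$: $\omega(A)$ is the largest dimension of a linear subspace of $\mathbb F_q^n$ contained in $A \cup \{0\}$; $\omega_{\mathrm{aff}}(A)$ is the largest dimension of an affine subspace of $\mathbb F_q^n$ contained in $A$; the direction set of $A$ is $A^\to := \{d \in \mathbb F_q^n : \exists x \in \mathbb F_q^n \text{ with } x + \lambda d \in A \text{ for all } \lambda \in \mathbb F_q\}$, and $\omega^\to(A) := \omega(A^\to)$. $\mathrm{rank}(A)$ is the dimension of the linear span of $A$. An affine relation on $x_1,\ldots,x_k$ is an equation $\sum_i \lambda_i x_i = 0$ with $\sum_i \lambda_i = 0$; $A$ is affinely independent if it has no such relation with some $\lambda_i \ne 0$, and $\mathrm{rank}_{\mathrm{aff}}(A)$ is the size of a maximal affinely independent subset of $A$. *)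

theory Defs
  imports "HOL-Analysis.Analysis"
begin

text \<open>Vectors in F_q^n are modelled as 'a ^ 'n with 'a a finite field and 'n a finite
  index type; linear algebra is the library's vector space structure vec (scalar
  multiplication (*s)).\<close>

definition vjoin :: "'a ^ 'n \<Rightarrow> 'a ^ 'm \<Rightarrow> 'a ^ ('n + 'm)" where
  "vjoin x y = (\<chi> i. case i of Inl j \<Rightarrow> x $ j | Inr j \<Rightarrow> y $ j)"

definition vprod :: "('a ^ 'n) set \<Rightarrow> ('a ^ 'm) set \<Rightarrow> ('a ^ ('n + 'm)) set" where
  "vprod A B = {vjoin x y | x y. x \<in> A \<and> y \<in> B}"

definition omega :: "('a::field ^ 'n::finite) set \<Rightarrow> nat" where
  "omega A = Max {vec.dim V | V. vec.subspace V \<and> V \<subseteq> A \<union> {0}}"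

definition omega_aff :: "('a::field ^ 'n::finite) set \<Rightarrow> nat" where
  "omega_aff A = Max {vec.dim W | W x. vec.subspace W \<and> (\<lambda>w. x + w) ` W \<subseteq> A}"

definition dirset :: "('a::field ^ 'n::finite) set \<Rightarrow> ('a ^ 'n) set" where
  "dirset A = {d. \<exists>x. \<forall>t. x + t *s d \<in> A}"

definition omega_dir :: "('a::field ^ 'n::finite) set \<Rightarrow> nat" where
  "omega_dir A = omega (dirset A)"

definition vrank :: "('a::field ^ 'n::finite) set \<Rightarrow> nat" where
  "vrank A = vec.dim (vec.span A)"

definition aff_indep :: "('a::field ^ 'n::finite) set \<Rightarrow> bool" where
  "aff_indep S \<longleftrightarrow> finite S \<and>
     \<not> (\<exists>c :: 'a ^ 'n \<Rightarrow> 'a. (\<Sum>x\<in>S. c x) = 0 \<and> (\<Sum>x\<in>S. c x *s x) = 0 \<and> (\<exists>x\<in>S. c x \<noteq> 0))"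

definition rank_aff :: "('a::field ^ 'n::finite) set \<Rightarrow> nat" where
  "rank_aff A = Max {card S | S. S \<subseteq> A \<and> aff_indep S}"

end

theory Submission
  imports Defs
begin

text \<open>A subspace V of F^n x F^m lies in the product of its two coordinate projections, so
  its dimension is at most the sum of theirs, while the product of two subspaces has exactly the
  sum of their dimensions. Applied to subspaces inside A \<union> {0}, and to translates of subspaces
  inside A, this gives (a) and (c). Direction sets and spans commute with products, which reduces
  (b) to (a) and gives (d). For any a \<in> A the affine rank of A is one more than the rank of
  A - a, which reduces (e) to (d).\<close>

definition vfst :: "'a ^ ('n::finite + 'm::finite) \<Rightarrow> 'a ^ 'n" where
  "vfst z = (\<chi> j. z $ Inl j)"

definition vsnd :: "'a ^ ('n::finite + 'm::finite) \<Rightarrow> 'a ^ 'm" where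
  "vsnd z = (\<chi> j. z $ Inr j)"

lemma vfst_vjoin [simp]: "vfst (vjoin x y) = x"
  by (simp add: vfst_def vjoin_def)

lemma vsnd_vjoin [simp]: "vsnd (vjoin x y) = y"
  by (simp add: vsnd_def vjoin_def)

lemma vjoin_vfst_vsnd [simp]: "vjoin (vfst z) (vsnd z) = z"
  by (simp add: vfst_def vsnd_def vjoin_def vec_eq_iff split: sum.split)

lemma vjoin_eq_iff [simp]: "vjoin x y = vjoin x' y' \<longleftrightarrow> x = x' \<and> y = y'"
  by (metis vfst_vjoin vsnd_vjoin)

lemma ex_vjoin: "(\<exists>z. P z) \<longleftrightarrow> (\<exists>x y. P (vjoin x y))"
  by (metis vjoin_vfst_vsnd)

lemma vjoin_add: "vjoin x y + vjoin x' y' = vjoin (x + x') (y + y')"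
  by (simp add: vjoin_def vec_eq_iff split: sum.split)

lemma vjoin_scale: "c *s vjoin x y = vjoin (c *s x) (c *s y)"
  by (simp add: vjoin_def vec_eq_iff split: sum.split)

lemma vjoin_0 [simp]: "vjoin 0 0 = 0"
  by (simp add: vjoin_def vec_eq_iff split: sum.split)

lemma vjoin_eq_0_iff [simp]: "vjoin x y = 0 \<longleftrightarrow> x = 0 \<and> y = 0"
  by (metis vjoin_0 vjoin_eq_iff)

lemma vfst_0 [simp]: "vfst 0 = 0"
  by (simp add: vfst_def vec_eq_iff)

lemma vsnd_0 [simp]: "vsnd 0 = 0"
  by (simp add: vsnd_def vec_eq_iff)

lemma vfst_add: "vfst (x + y) = vfst x + vfst y"
  by (simp add: vfst_def vec_eq_iff)

lemma vsnd_add: "vsnd (x + y) = vsnd x + vsnd y"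
  by (simp add: vsnd_def vec_eq_iff)

lemma vjoin_in_vprod [simp]: "vjoin x y \<in> vprod A B \<longleftrightarrow> x \<in> A \<and> y \<in> B"
  by (auto simp: vprod_def)

lemma in_vprod: "z \<in> vprod A B \<longleftrightarrow> vfst z \<in> A \<and> vsnd z \<in> B"
  by (metis vjoin_in_vprod vjoin_vfst_vsnd)

lemma vprod_mono: "A \<subseteq> A' \<Longrightarrow> B \<subseteq> B' \<Longrightarrow> vprod A B \<subseteq> vprod A' B'"
  by (auto simp: in_vprod)

lemma linear_vfst:
  "Vector_Spaces.linear ((*s) :: 'a::field \<Rightarrow> _) (*s) (vfst :: 'a ^ ('n::finite + 'm::finite) \<Rightarrow> _)"
  by unfold_locales (simp_all add: vfst_def vec_eq_iff)

lemma linear_vsnd: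
  "Vector_Spaces.linear ((*s) :: 'a::field \<Rightarrow> _) (*s) (vsnd :: 'a ^ ('n::finite + 'm::finite) \<Rightarrow> _)"
  by unfold_locales (simp_all add: vsnd_def vec_eq_iff)

lemma linear_vjoin_left:
  "Vector_Spaces.linear ((*s) :: 'a::field \<Rightarrow> _) (*s) (\<lambda>x :: 'a ^ 'n::finite. vjoin x (0 :: 'a ^ 'm::finite))"
  by unfold_locales (simp_all add: vjoin_add vjoin_scale)

lemma linear_vjoin_right:
  "Vector_Spaces.linear ((*s) :: 'a::field \<Rightarrow> _) (*s) (\<lambda>y :: 'a ^ 'm::finite. vjoin (0 :: 'a ^ 'n::finite) y)"
  by unfold_locales (simp_all add: vjoin_add vjoin_scale)

lemma subspace_vprod:
  fixes V :: "('a::field ^ 'n::finite) set" and W :: "('a ^ 'm::finite) set"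
  assumes "vec.subspace V" "vec.subspace W"
  shows "vec.subspace (vprod V W)"
  using assms unfolding vec.subspace_def
  by (auto simp: vprod_def vjoin_add vjoin_scale)

lemma dim_vprod:
  fixes V :: "('a::field ^ 'n::finite) set" and W :: "('a ^ 'm::finite) set"
  assumes "vec.subspace V" "vec.subspace W"
  shows "vec.dim (vprod V W) = vec.dim V + vec.dim W"
proof -
  let ?V = "(\<lambda>x. vjoin x (0 :: 'a ^ 'm)) ` V" and ?W = "(\<lambda>y. vjoin (0 :: 'a ^ 'n) y) ` W"
  have sub: "vec.subspace ?V" "vec.subspace ?W"
    using assms by (auto intro: vec.linear_subspace_image linear_vjoin_left linear_vjoin_right)
  have "vprod V W = {x + y |x y. x \<in> ?V \<and> y \<in> ?W}"
    by (force simp: vprod_def vjoin_add)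
  moreover have "vec.dim (?V \<inter> ?W) = 0"
    using vec.dim_subset[of "?V \<inter> ?W" "{0}"] by force
  moreover have "vec.dim ?V = vec.dim V" "vec.dim ?W = vec.dim W"
    by (auto intro!: vec.dim_image_eq linear_vjoin_left linear_vjoin_right simp: inj_on_def)
  ultimately show ?thesis
    using vec.dim_sums_Int[OF sub] by (simp only: add_0_right)
qed

lemma dim_le_dim_vfst_vsnd:
  fixes V :: "('a::field ^ ('n::finite + 'm::finite)) set"
  assumes "vec.subspace V"
  shows "vec.dim V \<le> vec.dim (vfst ` V) + vec.dim (vsnd ` V)"
proof -
  have sub: "vec.subspace (vfst ` V)" "vec.subspace (vsnd ` V)"
    using assms by (auto intro: vec.linear_subspace_image linear_vfst linear_vsnd)
  have "V \<subseteq> vprod (vfst ` V) (vsnd ` V)"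
    by (auto simp: in_vprod)
  then have "vec.dim V \<le> vec.dim (vprod (vfst ` V) (vsnd ` V))"
    by (rule vec.dim_subset)
  with dim_vprod[OF sub] show ?thesis
    by simp
qed

lemma dim_le_omega:
  assumes "vec.subspace V" "V \<subseteq> A \<union> {0}"
  shows "vec.dim V \<le> omega A"
  unfolding omega_def
  by (rule Max_ge, rule finite_subset[of _ "{..CARD('n)}"])
    (use assms dim_subset_UNIV_cart_gen in auto)

lemma omega_attained:
  fixes A :: "('a::field ^ 'n::finite) set"
  obtains V where "vec.subspace V" "V \<subseteq> A \<union> {0}" "vec.dim V = omega A"
proof -
  let ?D = "{vec.dim V | V. vec.subspace V \<and> V \<subseteq> A \<union> {0}}"
  have "finite ?D"
    by (rule finite_subset[of _ "{..CARD('n)}"]) (auto simp: dim_subset_UNIV_cart_gen)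
  moreover have "?D \<noteq> {}"
    using vec.subspace_single_0 by blast
  ultimately have "omega A \<in> ?D"
    unfolding omega_def by (rule Max_in)
  then show ?thesis
    using that by auto
qed

lemma omega_vprod_le:
  fixes A :: "('a::field ^ 'n::finite) set" and B :: "('a ^ 'm::finite) set"
  shows "omega (vprod A B) \<le> omega A + omega B"
proof -
  obtain V where V: "vec.subspace V" "V \<subseteq> vprod A B \<union> {0}" "vec.dim V = omega (vprod A B)"
    using omega_attained .
  have "vfst ` V \<subseteq> A \<union> {0}" "vsnd ` V \<subseteq> B \<union> {0}"
    using V(2) by (auto simp: in_vprod)
  then have "vec.dim (vfst ` V) \<le> omega A" "vec.dim (vsnd ` V) \<le> omega B"
    using V(1) by (auto intro!: dim_le_omega vec.linear_subspace_image linear_vfst linear_vsnd)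
  then show ?thesis
    using dim_le_dim_vfst_vsnd[OF V(1)] V(3) by linarith
qed

lemma omega_vprod_ge:
  fixes A :: "('a::field ^ 'n::finite) set" and B :: "('a ^ 'm::finite) set"
  assumes "0 \<in> A" "0 \<in> B"
  shows "omega A + omega B \<le> omega (vprod A B)"
proof -
  obtain V where V: "vec.subspace V" "V \<subseteq> A \<union> {0}" "vec.dim V = omega A"
    using omega_attained .
  obtain W where W: "vec.subspace W" "W \<subseteq> B \<union> {0}" "vec.dim W = omega B"
    using omega_attained .
  have "vprod V W \<subseteq> vprod A B \<union> {0}"
    using vprod_mono[OF V(2) W(2)] assms by (auto simp: insert_absorb)
  then show ?thesis
    using dim_le_omega[OF subspace_vprod[OF V(1) W(1)]] dim_vprod[OF V(1) W(1)] V(3) W(3)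
    by simp
qed

lemma omega_vprod:
  fixes A :: "('a::field ^ 'n::finite) set" and B :: "('a ^ 'm::finite) set"
  assumes "0 \<in> A" "0 \<in> B"
  shows "omega (vprod A B) = omega A + omega B"
  using omega_vprod_le omega_vprod_ge[OF assms] by (rule antisym)

lemma dim_le_omega_aff:
  assumes "vec.subspace W" "(\<lambda>w. x + w) ` W \<subseteq> A"
  shows "vec.dim W \<le> omega_aff A"
  unfolding omega_aff_def
  by (rule Max_ge, rule finite_subset[of _ "{..CARD('n)}"])
    (use assms dim_subset_UNIV_cart_gen in auto)

lemma omega_aff_attained:
  fixes A :: "('a::field ^ 'n::finite) set"
  assumes "A \<noteq> {}"
  obtains W x where "vec.subspace W" "(\<lambda>w. x + w) ` W \<subseteq> A" "vec.dim W = omega_aff A"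
proof -
  let ?D = "{vec.dim W | W x. vec.subspace W \<and> (\<lambda>w. x + w) ` W \<subseteq> A}"
  have "finite ?D"
    by (rule finite_subset[of _ "{..CARD('n)}"]) (auto simp: dim_subset_UNIV_cart_gen)
  moreover have "?D \<noteq> {}"
    using assms vec.subspace_single_0 by fastforce
  ultimately have "omega_aff A \<in> ?D"
    unfolding omega_aff_def by (rule Max_in)
  then show ?thesis
    using that by auto
qed

lemma omega_aff_vprod_le:
  fixes A :: "('a::field ^ 'n::finite) set" and B :: "('a ^ 'm::finite) set"
  assumes "A \<noteq> {}" "B \<noteq> {}"
  shows "omega_aff (vprod A B) \<le> omega_aff A + omega_aff B"
proof -
  have "vprod A B \<noteq> {}"
    using assms by (auto simp: vprod_def)
  then obtain W x where
    W: "vec.subspace W" "(\<lambda>w. x + w) ` W \<subseteq> vprod A B" "vec.dim W = omega_aff (vprod A B)"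
    by (rule omega_aff_attained)
  have "(\<lambda>w. vfst x + w) ` vfst ` W \<subseteq> A" "(\<lambda>w. vsnd x + w) ` vsnd ` W \<subseteq> B"
    using W(2) by (auto simp: in_vprod vfst_add vsnd_add)
  then have "vec.dim (vfst ` W) \<le> omega_aff A" "vec.dim (vsnd ` W) \<le> omega_aff B"
    using W(1) by (auto intro!: dim_le_omega_aff vec.linear_subspace_image linear_vfst linear_vsnd)
  then show ?thesis
    using dim_le_dim_vfst_vsnd[OF W(1)] W(3) by linarith
qed

lemma omega_aff_vprod_ge:
  fixes A :: "('a::field ^ 'n::finite) set" and B :: "('a ^ 'm::finite) set"
  assumes "A \<noteq> {}" "B \<noteq> {}"
  shows "omega_aff A + omega_aff B \<le> omega_aff (vprod A B)"
proof -
  obtain V a where V: "vec.subspace V" "(\<lambda>v. a + v) ` V \<subseteq> A" "vec.dim V = omega_aff A"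
    using omega_aff_attained[OF assms(1)] .
  obtain W b where W: "vec.subspace W" "(\<lambda>w. b + w) ` W \<subseteq> B" "vec.dim W = omega_aff B"
    using omega_aff_attained[OF assms(2)] .
  have "(\<lambda>z. vjoin a b + z) ` vprod V W \<subseteq> vprod A B"
    using V(2) W(2) by (auto simp: in_vprod vfst_add vsnd_add image_subset_iff)
  then show ?thesis
    using dim_le_omega_aff[OF subspace_vprod[OF V(1) W(1)]] dim_vprod[OF V(1) W(1)] V(3) W(3)
    by simp
qed

lemma omega_aff_vprod:
  fixes A :: "('a::field ^ 'n::finite) set" and B :: "('a ^ 'm::finite) set"
  assumes "A \<noteq> {}" "B \<noteq> {}"
  shows "omega_aff (vprod A B) = omega_aff A + omega_aff B"
  using omega_aff_vprod_le[OF assms] omega_aff_vprod_ge[OF assms] by (rule antisym)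

lemma dirset_vprod:
  fixes A :: "('a::field ^ 'n::finite) set" and B :: "('a ^ 'm::finite) set"
  shows "dirset (vprod A B) = vprod (dirset A) (dirset B)"
proof (rule set_eqI)
  fix z :: "'a ^ ('n + 'm)"
  obtain d e where z: "z = vjoin d e"
    by (metis vjoin_vfst_vsnd)
  have "z \<in> dirset (vprod A B) \<longleftrightarrow> (\<exists>x y. \<forall>t. vjoin x y + t *s z \<in> vprod A B)"
    unfolding dirset_def mem_Collect_eq by (rule ex_vjoin)
  also have "\<dots> \<longleftrightarrow> (\<exists>x y. \<forall>t. x + t *s d \<in> A \<and> y + t *s e \<in> B)"
    by (simp add: z vjoin_scale vjoin_add)
  also have "\<dots> \<longleftrightarrow> z \<in> vprod (dirset A) (dirset B)"
    by (auto simp: z dirset_def)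
  finally show "z \<in> dirset (vprod A B) \<longleftrightarrow> z \<in> vprod (dirset A) (dirset B)" .
qed

lemma zero_in_dirset: "A \<noteq> {} \<Longrightarrow> 0 \<in> dirset A"
  by (auto simp: dirset_def)

lemma omega_dir_vprod:
  fixes A :: "('a::field ^ 'n::finite) set" and B :: "('a ^ 'm::finite) set"
  assumes "A \<noteq> {}" "B \<noteq> {}"
  shows "omega_dir (vprod A B) = omega_dir A + omega_dir B"
  unfolding omega_dir_def dirset_vprod
  using zero_in_dirset[OF assms(1)] zero_in_dirset[OF assms(2)] by (rule omega_vprod)

lemma span_vprod:
  fixes A :: "('a::field ^ 'n::finite) set" and B :: "('a ^ 'm::finite) set"
  assumes "0 \<in> A" "0 \<in> B"
  shows "vec.span (vprod A B) = vprod (vec.span A) (vec.span B)"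
proof
  show "vec.span (vprod A B) \<subseteq> vprod (vec.span A) (vec.span B)"
    by (intro vec.span_minimal subspace_vprod vec.subspace_span vprod_mono vec.span_superset)
  show "vprod (vec.span A) (vec.span B) \<subseteq> vec.span (vprod A B)"
  proof
    fix z assume "z \<in> vprod (vec.span A) (vec.span B)"
    then have "vjoin (vfst z) 0 \<in> (\<lambda>x. vjoin x 0) ` vec.span A"
      and "vjoin 0 (vsnd z) \<in> (\<lambda>y. vjoin 0 y) ` vec.span B"
      by (auto simp: in_vprod)
    then have "vjoin (vfst z) 0 \<in> vec.span ((\<lambda>x. vjoin x 0) ` A)"
      and "vjoin 0 (vsnd z) \<in> vec.span ((\<lambda>y. vjoin 0 y) ` B)"
      by (simp_all add: vec.linear_span_image[OF linear_vjoin_left]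
          vec.linear_span_image[OF linear_vjoin_right])
    moreover have "(\<lambda>x. vjoin x 0) ` A \<subseteq> vprod A B" "(\<lambda>y. vjoin 0 y) ` B \<subseteq> vprod A B"
      using assms by auto
    ultimately have "vjoin (vfst z) 0 \<in> vec.span (vprod A B)" "vjoin 0 (vsnd z) \<in> vec.span (vprod A B)"
      using vec.span_mono by blast+
    then have "vjoin (vfst z) 0 + vjoin 0 (vsnd z) \<in> vec.span (vprod A B)"
      by (rule vec.span_add)
    then show "z \<in> vec.span (vprod A B)"
      by (simp add: vjoin_add)
  qed
qed

lemma vrank_vprod:
  fixes A :: "('a::field ^ 'n::finite) set" and B :: "('a ^ 'm::finite) set"
  assumes "0 \<in> A" "0 \<in> B"
  shows "vrank (vprod A B) = vrank A + vrank B"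
  unfolding vrank_def span_vprod[OF assms] by (intro dim_vprod vec.subspace_span)

lemma independent_diffs_if_aff_indep:
  fixes S :: "('a::field ^ 'n::finite) set"
  assumes S: "aff_indep S" and s: "s \<in> S"
  shows "vec.independent ((\<lambda>x. x - s) ` (S - {s}))"
  unfolding vec.independent_explicit
proof (intro conjI allI impI ballI)
  have fin: "finite S"
    using S by (simp add: aff_indep_def)
  then show "finite ((\<lambda>x. x - s) ` (S - {s}))"
    by simp
  have inj: "inj_on (\<lambda>x. x - s) (S - {s})"
    by (auto simp: inj_on_def)
  fix c v
  assume c: "(\<Sum>v\<in>(\<lambda>x. x - s) ` (S - {s}). c v *s v) = 0"
    and v: "v \<in> (\<lambda>x. x - s) ` (S - {s})"
  \<comment> \<open>the linear relation among the x - s is an affine relation among the x, with weight at s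
    chosen to make the weights sum to 0\<close>
  define c' where "c' x = (if x = s then - (\<Sum>y\<in>S - {s}. c (y - s)) else c (x - s))" for x
  have "(\<Sum>x\<in>S. c' x) = 0"
    using sum.remove[OF fin s, of c'] by (simp add: c'_def)
  moreover have "(\<Sum>x\<in>S. c' x *s x) = 0"
  proof -
    have "(\<Sum>x\<in>S. c' x *s x) = (\<Sum>x\<in>S - {s}. c (x - s) *s x) - (\<Sum>x\<in>S - {s}. c (x - s)) *s s"
      using sum.remove[OF fin s, of "\<lambda>x. c' x *s x"] by (simp add: c'_def)
    also have "\<dots> = (\<Sum>x\<in>S - {s}. c (x - s) *s (x - s))"
      by (simp add: vec.scale_right_diff_distrib sum_subtractf vec.scale_sum_left)
    also have "\<dots> = 0"
      using c by (simp add: sum.reindex[OF inj])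
    finally show ?thesis .
  qed
  ultimately have "\<forall>x\<in>S. c' x = 0"
    using S unfolding aff_indep_def by blast
  moreover obtain x where "x \<in> S" "x \<noteq> s" "v = x - s"
    using v by auto
  ultimately show "c v = 0"
    by (auto simp: c'_def)
qed

lemma aff_indep_insert_translate:
  fixes B :: "('a::field ^ 'n::finite) set"
  assumes B: "vec.independent B"
  shows "aff_indep (insert a ((\<lambda>v. v + a) ` B))"
proof -
  let ?S = "insert a ((\<lambda>v. v + a) ` B)"
  have fin: "finite B"
    using B by (rule vec.finiteI_independent)
  have inj: "inj_on (\<lambda>v. v + a) B"
    by (auto simp: inj_on_def)
  have a: "a \<notin> (\<lambda>v. v + a) ` B"
    using B vec.dependent_zero by force
  have "c x = 0" if c1: "(\<Sum>x\<in>?S. c x) = 0" and c2: "(\<Sum>x\<in>?S. c x *s x) = 0" and x: "x \<in> ?S"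
    for c :: "'a ^ 'n \<Rightarrow> 'a" and x
  proof -
    have sum_c: "c a + (\<Sum>v\<in>B. c (v + a)) = 0"
      using c1 fin a by (simp add: sum.reindex[OF inj])
    have "0 = c a *s a + (\<Sum>v\<in>B. c (v + a) *s (v + a))"
      using c2 fin a by (simp add: sum.reindex[OF inj])
    also have "\<dots> = (c a + (\<Sum>v\<in>B. c (v + a))) *s a + (\<Sum>v\<in>B. c (v + a) *s v)"
      by (simp add: vec.scale_right_distrib sum.distrib vec.scale_sum_left vec.scale_left_distrib)
    also have "\<dots> = (\<Sum>v\<in>B. c (v + a) *s v)"
      using sum_c by simp
    finally have "\<forall>v\<in>B. c (v + a) = 0"
      using B unfolding vec.independent_explicit by (elim conjE allE[of _ "\<lambda>v. c (v + a)"]) simp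
    with sum_c x show "c x = 0"
      by auto
  qed
  with fin show ?thesis
    unfolding aff_indep_def by blast
qed

lemma card_aff_indep_le:
  fixes A :: "('a::field ^ 'n::finite) set"
  assumes a: "a \<in> A" and S: "S \<subseteq> A" "aff_indep S"
  shows "card S \<le> vrank ((\<lambda>x. x - a) ` A) + 1"
proof (cases "S = {}")
  case False
  then obtain s where s: "s \<in> S"
    by auto
  have fin: "finite S"
    using S(2) by (simp add: aff_indep_def)
  have "(\<lambda>x. x - s) ` (S - {s}) \<subseteq> vec.span ((\<lambda>x. x - a) ` A)"
  proof
    fix z assume "z \<in> (\<lambda>x. x - s) ` (S - {s})"
    then obtain x where x: "x \<in> S" "z = x - s"
      by auto
    have "x - a \<in> vec.span ((\<lambda>x. x - a) ` A)" "s - a \<in> vec.span ((\<lambda>x. x - a) ` A)"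
      using x s S(1) by (auto intro: vec.span_base)
    then have "(x - a) - (s - a) \<in> vec.span ((\<lambda>x. x - a) ` A)"
      by (rule vec.span_diff)
    then show "z \<in> vec.span ((\<lambda>x. x - a) ` A)"
      using x by simp
  qed
  then have "card ((\<lambda>x. x - s) ` (S - {s})) \<le> vrank ((\<lambda>x. x - a) ` A)"
    unfolding vrank_def
    using independent_diffs_if_aff_indep[OF S(2) s] by (rule vec.independent_card_le_dim)
  moreover have "card ((\<lambda>x. x - s) ` (S - {s})) = card S - 1"
    using fin s by (simp add: card_image inj_on_def)
  ultimately show ?thesis
    by linarith
qed simp

lemma exists_aff_indep_card:
  fixes A :: "('a::field ^ 'n::finite) set"
  assumes a: "a \<in> A"
  obtains S where "S \<subseteq> A" "aff_indep S" "card S = vrank ((\<lambda>x. x - a) ` A) + 1"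
proof -
  obtain B where B: "B \<subseteq> (\<lambda>x. x - a) ` A" "vec.independent B"
    "card B = vrank ((\<lambda>x. x - a) ` A)"
    unfolding vrank_def vec.dim_span by (meson vec.basis_exists)
  have "a \<notin> (\<lambda>v. v + a) ` B"
    using B(2) vec.dependent_zero by force
  then have "card (insert a ((\<lambda>v. v + a) ` B)) = card B + 1"
    using vec.finiteI_independent[OF B(2)] by (simp add: card_image inj_on_def)
  moreover have "insert a ((\<lambda>v. v + a) ` B) \<subseteq> A"
    using a B(1) by auto
  ultimately show ?thesis
    using aff_indep_insert_translate[OF B(2)] B(3) by (intro that) simp_all
qed

lemma rank_aff_eq_vrank:
  fixes A :: "('a::field ^ 'n::finite) set"
  assumes a: "a \<in> A"
  shows "rank_aff A = vrank ((\<lambda>x. x - a) ` A) + 1"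
  unfolding rank_aff_def
proof (rule Max_eqI)
  show "finite {card S |S. S \<subseteq> A \<and> aff_indep S}"
    by (rule finite_subset[of _ "{..vrank ((\<lambda>x. x - a) ` A) + 1}"])
      (auto dest: card_aff_indep_le[OF a])
  show "k \<le> vrank ((\<lambda>x. x - a) ` A) + 1" if "k \<in> {card S |S. S \<subseteq> A \<and> aff_indep S}" for k
    using that card_aff_indep_le[OF a] by auto
  obtain S where "S \<subseteq> A" "aff_indep S" "card S = vrank ((\<lambda>x. x - a) ` A) + 1"
    using exists_aff_indep_card[OF a] .
  then show "vrank ((\<lambda>x. x - a) ` A) + 1 \<in> {card S |S. S \<subseteq> A \<and> aff_indep S}"
    by (intro CollectI exI[of _ S]) simp
qed

lemma translate_image_iff: "x \<in> (\<lambda>z. z - c) ` S \<longleftrightarrow> x + c \<in> S"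
  for c :: "'a::ab_group_add"
  by force

lemma translate_vprod:
  fixes a :: "'a::ab_group_add ^ 'n::finite" and b :: "'a ^ 'm::finite"
  shows "(\<lambda>z. z - vjoin a b) ` vprod A B = vprod ((\<lambda>x. x - a) ` A) ((\<lambda>y. y - b) ` B)"
  by (simp add: set_eq_iff translate_image_iff in_vprod vfst_add vsnd_add)

lemma rank_aff_vprod:
  fixes A :: "('a::field ^ 'n::finite) set" and B :: "('a ^ 'm::finite) set"
  assumes "A \<noteq> {}" "B \<noteq> {}"
  shows "rank_aff (vprod A B) = rank_aff A + rank_aff B - 1"
proof -
  obtain a b where a: "a \<in> A" and b: "b \<in> B"
    using assms by blast
  have "rank_aff (vprod A B) = vrank ((\<lambda>z. z - vjoin a b) ` vprod A B) + 1"
    using a b by (intro rank_aff_eq_vrank) simp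
  also have "\<dots> = vrank ((\<lambda>x. x - a) ` A) + vrank ((\<lambda>y. y - b) ` B) + 1"
    unfolding translate_vprod using a b by (subst vrank_vprod) auto
  finally show ?thesis
    using rank_aff_eq_vrank[OF a] rank_aff_eq_vrank[OF b] by simp
qed

theorem proposition2p1:
  fixes A :: "('a::{field,finite} ^ 'n::finite) set" and B :: "('a ^ 'm::finite) set"
  assumes "A \<noteq> {}" and "B \<noteq> {}"
  shows "(0 \<in> A \<and> 0 \<in> B \<longrightarrow> omega (vprod A B) = omega A + omega B)
    \<and> omega_dir (vprod A B) = omega_dir A + omega_dir B
    \<and> omega_aff (vprod A B) = omega_aff A + omega_aff B
    \<and> (0 \<in> A \<and> 0 \<in> B \<longrightarrow> vrank (vprod A B) = vrank A + vrank B)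
    \<and> rank_aff (vprod A B) = rank_aff A + rank_aff B - 1"
  using omega_vprod[of A B] omega_dir_vprod[OF assms] omega_aff_vprod[OF assms]
    vrank_vprod[of A B] rank_aff_vprod[OF assms]
  by blast

end
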